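(* For any compilation chain for partial programs and any trace relation ${\sim}\subseteq\mathit{Trace}_S\times\mathit{Trace}_T$ with existential and universal images $\tilde\tau,\tilde\sigma$ (lifted to hyperproperties), $\mathit{RHC}^{\sim}$ is equivalent to $\mathit{RHP}^{\tilde\tau}$. Moreover, if $\tilde\tau\circ\tilde\sigma=\mathrm{id}$ (a Galois insertion), then $\mathit{RHC}^{\sim}$ implies $\mathit{RHP}^{\tilde\sigma}$; and if $\tilde\sigma\circ\tilde\tau=\mathrm{id}$ (a Galois reflection), then $\mathit{RHP}^{\tilde\sigma}$ implies $\mathit{RHC}^{\sim}$. Here $\mathit{RHC}^{\sim}\equiv\forall P\ \forall C_T\ \exists C_S\ \forall t.\ C_T[P{\downarrow}]\rightsquigarrow t\iff(\exists s\sim t.\ C_S[P]\rightsquigarrow s)$; $\mathit{RHP}^{\tilde\tau}\equiv\forall P\ \forall H_S.\ P\models_R H_S\Rightarrow P{\downarrow}\models_R\tilde\tau(H_S)$; $\mathit{RHP}^{\tilde\sigma}\equiv\forall P\ \forall H_T.\ P\models_R\tilde\sigma(H_T)\Rightarrow P{\downarrow}\models_R H_T$.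
   Context: A compilation chain for partial programs consists of source partial programs $P$ and source contexts $C_S$, target partial programs and target contexts $C_T$, linking $C[P]$ into whole programs, sets $\mathit{Trace}_S,\mathit{Trace}_T$ of traces, semantics relations $W\rightsquigarrow t$ for whole programs, and a compiler $P\mapsto P{\downarrow}$. $\mathit{beh}(W)=\{t\mid W\rightsquigarrow t\}$. A hyperproperty is a set of sets of traces; $P\models_R H$ iff for every context $C$ at the same level, $\mathit{beh}(C[P])\in H$. The existential image of $\sim$ is $\tilde\tau(\pi)=\{t\mid\exists s.\ s\sim t\wedge s\in\pi\}$ and its universal image is $\tilde\sigma(\pi)=\{s\mid\forall t.\ s\sim t\Rightarrow t\in\pi\}$; on hyperproperties, $\tilde\tau(H_S)=\{\tilde\tau(\pi)\mid\pi\in H_S\}$ and $\tilde\sigma(H_T)=\{\tilde\sigma(\pi)\mid\pi\in H_T\}$. The identities $\tilde\tau\circ\tilde\sigma=\mathrm{id}$, $\tilde\sigma\circ\tilde\tau=\mathrm{id}$ refer to the maps on trace properties. *)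

theory Defs
  imports Main
begin

text \<open>A compilation chain is given by the parameters:
  linkS :: source context \<Rightarrow> source partial program \<Rightarrow> source whole program,
  semS  :: source whole program \<Rightarrow> source trace \<Rightarrow> bool  (W \<rightsquigarrow> s),
  linkT, semT analogously at the target level, and
  cmp  :: source partial program \<Rightarrow> target partial program.\<close>

definition beh :: "('w \<Rightarrow> 't \<Rightarrow> bool) \<Rightarrow> 'w \<Rightarrow> 't set" where
  "beh sem W = {t. sem W t}"

definition rsat :: "('c \<Rightarrow> 'p \<Rightarrow> 'w) \<Rightarrow> ('w \<Rightarrow> 't \<Rightarrow> bool) \<Rightarrow> 'p \<Rightarrow> 't set set \<Rightarrow> bool" where
  "rsat link sem P H = (\<forall>C. beh sem (link C P) \<in> H)"

definition tau :: "('s \<Rightarrow> 't \<Rightarrow> bool) \<Rightarrow> 's set \<Rightarrow> 't set" where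
  "tau rel \<pi> = {t. \<exists>s. rel s t \<and> s \<in> \<pi>}"

definition sigma :: "('s \<Rightarrow> 't \<Rightarrow> bool) \<Rightarrow> 't set \<Rightarrow> 's set" where
  "sigma rel \<pi> = {s. \<forall>t. rel s t \<longrightarrow> t \<in> \<pi>}"

definition tauH :: "('s \<Rightarrow> 't \<Rightarrow> bool) \<Rightarrow> 's set set \<Rightarrow> 't set set" where
  "tauH rel H = {tau rel \<pi> | \<pi>. \<pi> \<in> H}"

definition sigmaH :: "('s \<Rightarrow> 't \<Rightarrow> bool) \<Rightarrow> 't set set \<Rightarrow> 's set set" where
  "sigmaH rel H = {sigma rel \<pi> | \<pi>. \<pi> \<in> H}"

definition RHC where
  "RHC linkS semS linkT semT cmp rel =
     (\<forall>P CT. \<exists>CS. \<forall>t. semT (linkT CT (cmp P)) t \<longleftrightarrow> (\<exists>s. rel s t \<and> semS (linkS CS P) s))"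

definition RHP_tau where
  "RHP_tau linkS semS linkT semT cmp rel =
     (\<forall>P HS. rsat linkS semS P HS \<longrightarrow> rsat linkT semT (cmp P) (tauH rel HS))"

definition RHP_sigma where
  "RHP_sigma linkS semS linkT semT cmp rel =
     (\<forall>P HT. rsat linkS semS P (sigmaH rel HT) \<longrightarrow> rsat linkT semT (cmp P) HT)"

end

theory Submission
  imports Defs
begin

text \<open>Robust satisfaction of H means that the set of behaviours of P, one per context, is
  included in H; and RHC says that the target behaviour set of the compiled program is included
  in the \<open>\<tau>\<close>-image of the source behaviour set.  Since the source behaviour set is the
  strongest hyperproperty robustly satisfied by P, and images are monotone, this is exactly
  RHP through \<open>\<tau>\<close>.  For the \<open>\<sigma>\<close>-variants it remains to move between the \<open>\<tau>\<close>- and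
  \<open>\<sigma>\<close>-images: under a Galois insertion \<open>\<tau>\<close> maps the \<open>\<sigma>\<close>-image of H back onto H, and
  under a Galois reflection every source hyperproperty is the \<open>\<sigma>\<close>-image of its \<open>\<tau>\<close>-image.\<close>

definition robust_behs :: "('c \<Rightarrow> 'p \<Rightarrow> 'w) \<Rightarrow> ('w \<Rightarrow> 't \<Rightarrow> bool) \<Rightarrow> 'p \<Rightarrow> 't set set" where
  "robust_behs link sem P = range (\<lambda>C. beh sem (link C P))"

lemma rsat_iff_robust_behs_subset: "rsat link sem P H \<longleftrightarrow> robust_behs link sem P \<subseteq> H"
  unfolding rsat_def robust_behs_def by blast

lemma tauH_eq_image: "tauH rel H = tau rel ` H"
  unfolding tauH_def by blast

lemma sigmaH_eq_image: "sigmaH rel H = sigma rel ` H"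
  unfolding sigmaH_def by blast

lemma RHC_iff_robust_behs_subset:
  "RHC linkS semS linkT semT cmp rel \<longleftrightarrow>
   (\<forall>P. robust_behs linkT semT (cmp P) \<subseteq> tau rel ` robust_behs linkS semS P)"
proof -
  have "RHC linkS semS linkT semT cmp rel \<longleftrightarrow>
    (\<forall>P CT. \<exists>CS. beh semT (linkT CT (cmp P)) = tau rel (beh semS (linkS CS P)))"
    unfolding RHC_def beh_def tau_def by (simp add: set_eq_iff)
  then show ?thesis
    unfolding robust_behs_def by blast
qed

lemma RHC_iff_RHP_tau:
  "RHC linkS semS linkT semT cmp rel \<longleftrightarrow> RHP_tau linkS semS linkT semT cmp rel"
  unfolding RHC_iff_robust_behs_subset RHP_tau_def rsat_iff_robust_behs_subset tauH_eq_image
  by (blast intro: image_mono)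

lemma RHC_imp_RHP_sigma_if_insertion:
  assumes insertion: "tau rel \<circ> sigma rel = id"
    and "RHC linkS semS linkT semT cmp rel"
  shows "RHP_sigma linkS semS linkT semT cmp rel"
  unfolding RHP_sigma_def rsat_iff_robust_behs_subset sigmaH_eq_image
proof (intro allI impI)
  fix P HT
  assume "robust_behs linkS semS P \<subseteq> sigma rel ` HT"
  then have "tau rel ` robust_behs linkS semS P \<subseteq> (tau rel \<circ> sigma rel) ` HT"
    by (auto simp: image_comp)
  with assms show "robust_behs linkT semT (cmp P) \<subseteq> HT"
    unfolding RHC_iff_robust_behs_subset by auto
qed

lemma RHP_sigma_imp_RHC_if_reflection:
  assumes reflection: "sigma rel \<circ> tau rel = id"
    and RHP: "RHP_sigma linkS semS linkT semT cmp rel"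
  shows "RHC linkS semS linkT semT cmp rel"
  unfolding RHC_iff_robust_behs_subset
proof
  fix P
  have "robust_behs linkS semS P \<subseteq> sigma rel ` tau rel ` robust_behs linkS semS P"
    using reflection by (simp add: image_comp)
  with RHP show "robust_behs linkT semT (cmp P) \<subseteq> tau rel ` robust_behs linkS semS P"
    unfolding RHP_sigma_def rsat_iff_robust_behs_subset sigmaH_eq_image by blast
qed

theorem theorem5p3:
  fixes linkS :: "'cs \<Rightarrow> 'ps \<Rightarrow> 'ws" and semS :: "'ws \<Rightarrow> 'ts \<Rightarrow> bool"
    and linkT :: "'ct \<Rightarrow> 'pt \<Rightarrow> 'wt" and semT :: "'wt \<Rightarrow> 'tt \<Rightarrow> bool"
    and cmp :: "'ps \<Rightarrow> 'pt" and rel :: "'ts \<Rightarrow> 'tt \<Rightarrow> bool"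
  shows "(RHC linkS semS linkT semT cmp rel \<longleftrightarrow> RHP_tau linkS semS linkT semT cmp rel)
    \<and> (tau rel \<circ> sigma rel = id \<longrightarrow>
         RHC linkS semS linkT semT cmp rel \<longrightarrow> RHP_sigma linkS semS linkT semT cmp rel)
    \<and> (sigma rel \<circ> tau rel = id \<longrightarrow>
         RHP_sigma linkS semS linkT semT cmp rel \<longrightarrow> RHC linkS semS linkT semT cmp rel)"
  using RHC_iff_RHP_tau RHC_imp_RHP_sigma_if_insertion RHP_sigma_imp_RHC_if_reflection
  by blast

end
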